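(* Let $0<q<1$. The kernel $K(\mu,n)=1/(q^{\mu};q)_n$ is strictly sign regular of order $3$ on $(0,\infty)\times\mathbb{N}_0$ with sign pattern $(+,-,-)$, i.e. for all reals $0<\mu_1<\mu_2<\mu_3$ and integers $0\le n_1<n_2<n_3$: $K(\mu_1,n_1)>0$, $\det\big(K(\mu_i,n_j)\big)_{i,j=1}^2<0$, and $\det\big(K(\mu_i,n_j)\big)_{i,j=1}^3<0$ (for all choices of indices of the respective sizes).
   Context: $(a;q)_n=\prod_{j=0}^{n-1}(1-aq^j)$, with $(a;q)_0=1$. *)

theory Defs
  imports Complex_Main
begin

definition qpoch :: "real \<Rightarrow> real \<Rightarrow> nat \<Rightarrow> real" where
  "qpoch a q n = (\<Prod>j<n. (1 - a * q ^ j))"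

definition K :: "real \<Rightarrow> real \<Rightarrow> nat \<Rightarrow> real" where
  "K q \<mu> n = 1 / qpoch (q powr \<mu>) q n"

definition det2 :: "real \<Rightarrow> real \<Rightarrow> real \<Rightarrow> nat \<Rightarrow> nat \<Rightarrow> real" where
  "det2 q m1 m2 n1 n2 = K q m1 n1 * K q m2 n2 - K q m1 n2 * K q m2 n1"

definition det3 :: "real \<Rightarrow> real \<Rightarrow> real \<Rightarrow> real \<Rightarrow> nat \<Rightarrow> nat \<Rightarrow> nat \<Rightarrow> real" where
  "det3 q m1 m2 m3 n1 n2 n3 =
     K q m1 n1 * (K q m2 n2 * K q m3 n3 - K q m2 n3 * K q m3 n2)
   - K q m1 n2 * (K q m2 n1 * K q m3 n3 - K q m2 n3 * K q m3 n1)
   + K q m1 n3 * (K q m2 n1 * K q m3 n2 - K q m2 n2 * K q m3 n1)"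

end

theory Submission
  imports Defs
begin

text \<open>
  Put \<open>x = q powr \<mu>\<close>, so \<open>0 < x < 1\<close> and \<open>x\<close> decreases in \<open>\<mu>\<close>. Since
  \<open>K(\<mu>, n + k) / K(\<mu>, n) = 1 / (\<Prod>j<k. 1 - x q^(n+j))\<close> increases with \<open>x\<close>, every
  2x2 minor is negative. For consecutive columns \<open>n, n+1, n+2\<close>, factoring \<open>K(\<mu>\<^sub>i, n+2)\<close> out
  of each row leaves a Vandermonde determinant in \<open>u\<^sub>i = x\<^sub>i q^n\<close>, equal to
  \<open>-q\<^sup>2 (u\<^sub>1 - u\<^sub>2)(u\<^sub>1 - u\<^sub>3)(u\<^sub>2 - u\<^sub>3) < 0\<close>. Arbitrary columns follow by induction on the
  column span: a three-term Pluecker relation expresses a 3x3 minor times a negative 2x2 minor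
  as a sum of products of minors with smaller span and 2x2 minors, all of known sign.
\<close>

definition minor2 :: "(nat \<Rightarrow> real) \<Rightarrow> (nat \<Rightarrow> real) \<Rightarrow> nat \<Rightarrow> nat \<Rightarrow> real" where
  "minor2 f g a b = f a * g b - f b * g a"

definition minor3 ::
  "(nat \<Rightarrow> real) \<Rightarrow> (nat \<Rightarrow> real) \<Rightarrow> (nat \<Rightarrow> real) \<Rightarrow> nat \<Rightarrow> nat \<Rightarrow> nat \<Rightarrow> real" where
  "minor3 f g h a b c = f a * minor2 g h b c - f b * minor2 g h a c + f c * minor2 g h a b"

lemma minor3_exchange_first:
  "minor3 f g h a b c * minor2 f g a' b
     = minor3 f g h a' b c * minor2 f g a b + minor3 f g h a a' b * minor2 f g b c"
  unfolding minor3_def minor2_def by algebra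

lemma minor3_exchange_second:
  "minor3 f g h a b c * minor2 f g b b'
     = minor3 f g h b b' c * minor2 f g a b + minor3 f g h a b b' * minor2 f g b c"
  unfolding minor3_def minor2_def by algebra

lemma minor3_neg_if_consecutive_neg:
  fixes f g h :: "nat \<Rightarrow> real"
  assumes minor2_neg: "\<And>i j. i < j \<Longrightarrow> minor2 f g i j < 0"
    and consecutive_neg: "\<And>n. minor3 f g h n (Suc n) (Suc (Suc n)) < 0"
    and "a < b" "b < c"
  shows "minor3 f g h a b c < 0"
  using assms(3,4)
proof (induction "c - a" arbitrary: a b c rule: less_induct)
  case less
  have neg_if_mult_eq_add: "x < 0"
    if "x * p = y * r + z * s" "p < 0" "y < 0" "r < 0" "z < 0" "s < 0" for x p y r z s :: real
  proof -
    have "0 < x * p" using that by (simp add: add_pos_pos mult_neg_neg)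
    with \<open>p < 0\<close> show ?thesis by (simp add: zero_less_mult_iff)
  qed
  consider "b = Suc a" "c = Suc b" | "Suc a < b" | "Suc b < c"
    using less.prems by linarith
  then show ?case
  proof cases
    case 1
    then show ?thesis using consecutive_neg by simp
  next
    case 2
    show ?thesis
    proof (rule neg_if_mult_eq_add[OF minor3_exchange_first[of f g h a b c "Suc a"]])
      show "minor3 f g h (Suc a) b c < 0" "minor3 f g h a (Suc a) b < 0"
        using less 2 by auto
    qed (use minor2_neg less.prems 2 in auto)
  next
    case 3
    show ?thesis
    proof (rule neg_if_mult_eq_add[OF minor3_exchange_second[of f g h a b c "Suc b"]])
      show "minor3 f g h b (Suc b) c < 0" "minor3 f g h a b (Suc b) < 0"
        using less 3 by auto
    qed (use minor2_neg less.prems 3 in auto)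
  qed
qed

lemma det2_eq_minor2: "det2 q \<mu>1 \<mu>2 = minor2 (K q \<mu>1) (K q \<mu>2)"
  by (simp add: fun_eq_iff det2_def minor2_def)

lemma det3_eq_minor3: "det3 q \<mu>1 \<mu>2 \<mu>3 = minor3 (K q \<mu>1) (K q \<mu>2) (K q \<mu>3)"
  by (simp add: fun_eq_iff det3_def minor3_def minor2_def)

lemma qpoch_Suc: "qpoch x q (Suc n) = qpoch x q n * (1 - x * q ^ n)"
  by (simp add: qpoch_def)

lemma qpoch_add: "qpoch x q (m + k) = qpoch x q m * (\<Prod>j<k. 1 - x * q ^ (m + j))"
  by (induction k) (simp_all add: qpoch_Suc)

lemma qpoch_factor_pos:
  fixes x q :: real
  assumes "0 \<le> q" "q \<le> 1" "x < 1"
  shows "0 < 1 - x * q ^ j"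
proof (cases "0 \<le> x")
  case True
  have "x * q ^ j \<le> x" using assms True by (simp add: mult_left_le power_le_one)
  then show ?thesis using assms by linarith
next
  case False
  then show ?thesis using assms by (simp add: mult_nonpos_nonneg le_less_trans[of _ 0 1])
qed

lemma qpoch_pos:
  fixes x q :: real
  assumes "0 \<le> q" "q \<le> 1" "x < 1"
  shows "0 < qpoch x q n"
  unfolding qpoch_def using qpoch_factor_pos[OF assms] by (simp add: prod_pos)

lemma qpoch_tail_strict_antimono:
  fixes x1 x2 q :: real
  assumes "0 < q" "q \<le> 1" "x2 < x1" "x1 < 1" "0 < k"
  shows "(\<Prod>j<k. 1 - x1 * q ^ (m + j)) < (\<Prod>j<k. 1 - x2 * q ^ (m + j))"
proof (rule prod_mono_strict[of 0])
  show "1 - x1 * q ^ (m + 0) < 1 - x2 * q ^ (m + 0)"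
    using assms by simp
  fix j assume "j \<in> {..<k}"
  show "0 \<le> 1 - x1 * q ^ (m + j) \<and> 1 - x1 * q ^ (m + j) \<le> 1 - x2 * q ^ (m + j)"
    using assms qpoch_factor_pos[of q x1 "m + j"] by (auto intro: less_imp_le)
  show "0 < 1 - x2 * q ^ (m + j)"
    using assms qpoch_factor_pos[of q x2 "m + j"] by simp
qed (use assms in auto)

lemma K_Suc: "K q \<mu> (Suc n) = K q \<mu> n / (1 - q powr \<mu> * q ^ n)"
  by (simp add: K_def qpoch_Suc)

lemma K_eq_K_Suc_mult:
  assumes "q powr \<mu> * q ^ n \<noteq> 1"
  shows "K q \<mu> n = K q \<mu> (Suc n) * (1 - q powr \<mu> * q ^ n)"
  using assms by (simp add: K_Suc)

lemma K_add: "K q \<mu> (m + k) = K q \<mu> m / (\<Prod>j<k. 1 - q powr \<mu> * q ^ (m + j))"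
  by (simp add: K_def qpoch_add)

lemma powr_in_unit_interval:
  fixes q \<mu> :: real
  assumes "0 < q" "q < 1" "0 < \<mu>"
  shows "0 < q powr \<mu>" "q powr \<mu> < 1"
  using assms powr01_less_one[of q \<mu>] by auto

lemma K_pos:
  assumes "0 < q" "q < 1" "0 < \<mu>"
  shows "0 < K q \<mu> n"
  unfolding K_def using assms qpoch_pos powr_in_unit_interval by simp

lemma det2_neg:
  assumes "0 < q" "q < 1" "0 < \<mu>1" "\<mu>1 < \<mu>2" "n1 < n2"
  shows "det2 q \<mu>1 \<mu>2 n1 n2 < 0"
proof -
  obtain k where "0 < k" and n2: "n2 = n1 + k"
    using \<open>n1 < n2\<close> less_imp_add_positive by blast
  define R where "R \<mu> = (\<Prod>j<k. 1 - q powr \<mu> * q ^ (n1 + j))" for \<mu>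
  have "q powr \<mu>2 < q powr \<mu>1" "q powr \<mu>1 < 1"
    using assms powr_less_mono' powr_in_unit_interval by auto
  then have "R \<mu>1 < R \<mu>2"
    unfolding R_def using assms \<open>0 < k\<close> by (intro qpoch_tail_strict_antimono) auto
  moreover have "0 < R \<mu>1"
    unfolding R_def using assms powr_in_unit_interval qpoch_factor_pos by (simp add: prod_pos)
  ultimately have "1 / R \<mu>2 < 1 / R \<mu>1"
    by (simp add: frac_less2)
  moreover have "det2 q \<mu>1 \<mu>2 n1 n2 = K q \<mu>1 n1 * K q \<mu>2 n1 * (1 / R \<mu>2 - 1 / R \<mu>1)"
    unfolding det2_def n2 K_add R_def by (simp add: field_simps)
  moreover have "0 < K q \<mu>1 n1 * K q \<mu>2 n1"
    using assms K_pos by simp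
  ultimately show ?thesis
    by (simp add: mult_pos_neg)
qed

lemma det3_consecutive_eq:
  fixes q :: real and n :: nat
  defines "u \<equiv> \<lambda>\<mu>. q powr \<mu> * q ^ n"
  assumes "\<forall>\<mu>\<in>{\<mu>1, \<mu>2, \<mu>3}. u \<mu> \<noteq> 1 \<and> q * u \<mu> \<noteq> 1"
  shows "det3 q \<mu>1 \<mu>2 \<mu>3 n (Suc n) (Suc (Suc n))
    = - q\<^sup>2 * (u \<mu>1 - u \<mu>2) * (u \<mu>1 - u \<mu>3) * (u \<mu>2 - u \<mu>3)
        * K q \<mu>1 (Suc (Suc n)) * K q \<mu>2 (Suc (Suc n)) * K q \<mu>3 (Suc (Suc n))"
proof -
  have shift: "K q \<mu> (Suc n) = K q \<mu> (Suc (Suc n)) * (1 - q * u \<mu>)"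
    "K q \<mu> n = K q \<mu> (Suc (Suc n)) * (1 - q * u \<mu>) * (1 - u \<mu>)"
    if "\<mu> \<in> {\<mu>1, \<mu>2, \<mu>3}" for \<mu>
    using assms that K_eq_K_Suc_mult[of q \<mu> n] K_eq_K_Suc_mult[of q \<mu> "Suc n"]
    by (auto simp: u_def mult.left_commute)
  show ?thesis
    unfolding det3_def shift[of \<mu>1, simplified] shift[of \<mu>2, simplified] shift[of \<mu>3, simplified]
    by algebra
qed

lemma det3_consecutive_neg:
  assumes "0 < q" "q < 1" "0 < \<mu>1" "\<mu>1 < \<mu>2" "\<mu>2 < \<mu>3"
  shows "det3 q \<mu>1 \<mu>2 \<mu>3 n (Suc n) (Suc (Suc n)) < 0"
proof -
  define u where "u \<mu> = q powr \<mu> * q ^ n" for \<mu>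
  have u_ne_1: "u \<mu> \<noteq> 1 \<and> q * u \<mu> \<noteq> 1" if "0 < \<mu>" for \<mu>
    using qpoch_factor_pos[of q "q powr \<mu>" n] qpoch_factor_pos[of q "q powr \<mu>" "Suc n"]
      powr_in_unit_interval[OF assms(1,2) that] assms
    by (simp add: u_def mult.left_commute)
  have "det3 q \<mu>1 \<mu>2 \<mu>3 n (Suc n) (Suc (Suc n))
    = - q\<^sup>2 * (u \<mu>1 - u \<mu>2) * (u \<mu>1 - u \<mu>3) * (u \<mu>2 - u \<mu>3)
        * K q \<mu>1 (Suc (Suc n)) * K q \<mu>2 (Suc (Suc n)) * K q \<mu>3 (Suc (Suc n))"
    unfolding u_def using assms u_ne_1[unfolded u_def] by (intro det3_consecutive_eq) auto
  moreover have "u \<mu>3 < u \<mu>2" "u \<mu>2 < u \<mu>1"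
    using assms powr_less_mono' by (simp_all add: u_def)
  moreover have "0 < K q \<mu> (Suc (Suc n))" if "0 < \<mu>" for \<mu>
    using K_pos assms that by simp
  ultimately show ?thesis
    using assms by (simp add: mult_pos_pos mult_neg_pos)
qed

theorem lemma4:
  fixes q :: real
  assumes "0 < q" and "q < 1"
  shows "(\<forall>\<mu>1 n1. 0 < \<mu>1 \<longrightarrow> K q \<mu>1 n1 > 0)
       \<and> (\<forall>\<mu>1 \<mu>2 n1 n2. 0 < \<mu>1 \<and> \<mu>1 < \<mu>2 \<and> n1 < n2 \<longrightarrow> det2 q \<mu>1 \<mu>2 n1 n2 < 0)
       \<and> (\<forall>\<mu>1 \<mu>2 \<mu>3 n1 n2 n3. 0 < \<mu>1 \<and> \<mu>1 < \<mu>2 \<and> \<mu>2 < \<mu>3 \<and> n1 < n2 \<and> n2 < n3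
            \<longrightarrow> det3 q \<mu>1 \<mu>2 \<mu>3 n1 n2 n3 < 0)"
proof (intro conjI allI impI)
  fix \<mu>1 :: real and n1 :: nat
  assume "0 < \<mu>1"
  then show "K q \<mu>1 n1 > 0"
    using K_pos assms by blast
next
  fix \<mu>1 \<mu>2 :: real and n1 n2 :: nat
  assume "0 < \<mu>1 \<and> \<mu>1 < \<mu>2 \<and> n1 < n2"
  then show "det2 q \<mu>1 \<mu>2 n1 n2 < 0"
    using det2_neg assms by blast
next
  fix \<mu>1 \<mu>2 \<mu>3 :: real and n1 n2 n3 :: nat
  assume "0 < \<mu>1 \<and> \<mu>1 < \<mu>2 \<and> \<mu>2 < \<mu>3 \<and> n1 < n2 \<and> n2 < n3"
  then have \<mu>: "0 < \<mu>1" "\<mu>1 < \<mu>2" "\<mu>2 < \<mu>3" and n: "n1 < n2" "n2 < n3"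
    by auto
  show "det3 q \<mu>1 \<mu>2 \<mu>3 n1 n2 n3 < 0"
    unfolding det3_eq_minor3
  proof (rule minor3_neg_if_consecutive_neg[OF _ _ n])
    show "minor2 (K q \<mu>1) (K q \<mu>2) i j < 0" if "i < j" for i j
      using det2_neg[OF assms \<mu>(1,2) that] by (simp add: det2_eq_minor2)
    show "minor3 (K q \<mu>1) (K q \<mu>2) (K q \<mu>3) m (Suc m) (Suc (Suc m)) < 0" for m
      using det3_consecutive_neg[OF assms \<mu>] by (simp add: det3_eq_minor3)
  qed
qed

end
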